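(* Let $(X,g_X)$ be the Eguchi--Hanson space. There are no critical rates for the operator $\mathcal{D}^*_X$ in the interval $[-2,0]$.
   Context: The Eguchi--Hanson space $X$ is the blow-up of $\mathbb{C}^2/\{\pm1\}$ at $0$ with its hyperkähler ALE metric $g_X$, asymptotic to the flat cone $\mathbb{R}^4/\{\pm1\}$ (the cone over $\mathbb{RP}^3$). The operator $\mathcal{D}^*_X:\Omega^1(X)\to\Omega^0(X)\oplus\Omega^2_+(X)$ is $\mathcal{D}^*_X\alpha=(\mathrm{d}^*_X\alpha,\pi_+\mathrm{d}_X\alpha)$, where $\pi_+$ is the projection to self-dual $2$-forms; it is the formal adjoint of $\mathcal{D}_X(f,\beta)=\mathrm{d}_Xf+\mathrm{d}^*_X\beta$. A rate $\lambda\in\mathbb{R}$ is critical for $\mathcal{D}^*_X$ if there exists a nonzero $1$-form $\alpha$ on the flat cone $(\mathbb{R}^4\setminus\{0\})/\{\pm1\}$ which is homogeneous of order $\lambda$ (its components with respect to the parallel coframe $dy_1,\dots,dy_4$ on $\mathbb{R}^4\setminus\{0\}$ are homogeneous functions of degree $\lambda$) and satisfies $\mathrm{d}^*\alpha=0$ and $\pi_+\mathrm{d}\alpha=0$ for the flat metric. *)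

theory Defs
  imports "HOL-Analysis.Analysis"
begin

definition pd :: "'n::finite \<Rightarrow> (real^'n \<Rightarrow> real) \<Rightarrow> real^'n \<Rightarrow> real" where
  "pd i f y = frechet_derivative f (at y) (axis i 1)"

inductive higher_partial :: "(real^'n::finite \<Rightarrow> real) \<Rightarrow> (real^'n \<Rightarrow> real) \<Rightarrow> bool"
  for f where
  base: "higher_partial f f"
| step: "higher_partial f g \<Longrightarrow> higher_partial f (pd i g)"

definition smooth_on :: "(real^'n::finite) set \<Rightarrow> (real^'n \<Rightarrow> real) \<Rightarrow> bool" where
  "smooth_on S f \<longleftrightarrow> (\<forall>g. higher_partial f g \<longrightarrow> (\<forall>y\<in>S. g differentiable (at y)))"

text \<open>A 1-form on R^4 minus 0 is encoded by its coefficient vector field: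
  alpha = sum_i (alpha y $ i) dy_i.  Curvature components F_ij = d_i a_j - d_j a_i.\<close>
definition dcoef :: "(real^4 \<Rightarrow> real^4) \<Rightarrow> 4 \<Rightarrow> 4 \<Rightarrow> real^4 \<Rightarrow> real" where
  "dcoef \<alpha> i j y = pd i (\<lambda>z. \<alpha> z $ j) y - pd j (\<lambda>z. \<alpha> z $ i) y"

text \<open>Critical rate of D^*_X: a nonzero smooth 1-form on (R^4 - 0)/{+-1}
  (i.e. invariant under y -> -y, whose pullback sends dy_i to -dy_i),
  homogeneous of order lambda, with d^* alpha = 0 and pi_+ d alpha = 0
  (orientation dy1 dy2 dy3 dy4; self-dual forms spanned by
   dy12+dy34, dy13+dy42, dy14+dy23).\<close>
definition critical_rate :: "real \<Rightarrow> bool" where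
  "critical_rate r \<longleftrightarrow> (\<exists>\<alpha> :: real^4 \<Rightarrow> real^4.
     (\<forall>i. smooth_on (UNIV - {0}) (\<lambda>y. \<alpha> y $ i)) \<and>
     (\<forall>y. y \<noteq> 0 \<longrightarrow> \<alpha> (- y) = - \<alpha> y) \<and>
     (\<forall>t y. t > 0 \<longrightarrow> y \<noteq> 0 \<longrightarrow> \<alpha> (t *\<^sub>R y) = (t powr r) *\<^sub>R \<alpha> y) \<and>
     (\<forall>y. y \<noteq> 0 \<longrightarrow> (\<Sum>i\<in>UNIV. pd i (\<lambda>z. \<alpha> z $ i) y) = 0) \<and>
     (\<forall>y. y \<noteq> 0 \<longrightarrow>
        dcoef \<alpha> 1 2 y + dcoef \<alpha> 3 4 y = 0 \<and>
        dcoef \<alpha> 1 3 y + dcoef \<alpha> 4 2 y = 0 \<and>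
        dcoef \<alpha> 1 4 y + dcoef \<alpha> 2 3 y = 0) \<and>
     (\<exists>y. y \<noteq> 0 \<and> \<alpha> y \<noteq> 0))"

end

(* Each component f of a coclosed anti-self-dual 1-form on R^4 - 0 is harmonic, by differentiating
   the two first-order equations once more. If the form is homogeneous of degree r and odd, so is f.
   For -2 < r < 0, comparing f with its maximum M on the unit sphere along radial and tangent lines
   gives 0 = Laplacian f <= r (r + 2) M, so M <= 0, and likewise for -f. For r = 0 the derivatives of
   f are harmonic of degree -1, hence vanish, so f is constant on the connected set R^4 - 0 and,
   being odd, zero. For r = -2 the function |y|^2 f is harmonic of degree 0 and odd, hence zero. *)

theory Submission
  imports Defs
begin

section \<open>Partial derivatives\<close>

lemma sum_axis_mult: "(\<Sum>k\<in>UNIV. (axis i (1::real))$k * D k) = D i"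
proof -
  have "\<And>k. (axis i (1::real))$k * D k = (if k = i then D i else 0)" by (simp add: axis_def)
  then show ?thesis by simp
qed

lemma pd_eq_if_has_derivative:
  assumes "(f has_derivative (\<lambda>v. \<Sum>j\<in>UNIV. v$j * D j)) (at y)"
  shows "pd i f y = D i"
proof -
  have "frechet_derivative f (at y) = (\<lambda>v. \<Sum>j\<in>UNIV. v$j * D j)"
    using frechet_derivative_at[OF assms] by simp
  then show ?thesis unfolding pd_def by (simp add: sum_axis_mult)
qed

lemma has_derivative_pd:
  assumes "f differentiable at y"
  shows "(f has_derivative (\<lambda>v. \<Sum>j\<in>UNIV. v$j * pd j f y)) (at y)"
proof -
  have "frechet_derivative f (at y) v = (\<Sum>j\<in>UNIV. v$j * pd j f y)" for v
  proof -
    have "frechet_derivative f (at y) v = frechet_derivative f (at y) (\<Sum>j\<in>UNIV. v$j *\<^sub>R axis j 1)"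
      using basis_expansion[of v] by (simp add: scalar_mult_eq_scaleR)
    also have "\<dots> = (\<Sum>j\<in>UNIV. v$j * frechet_derivative f (at y) (axis j 1))"
      using linear_frechet_derivative[OF assms] by (simp add: linear_sum linear_scale)
    finally show ?thesis by (simp add: pd_def)
  qed
  then have "frechet_derivative f (at y) = (\<lambda>v. \<Sum>j\<in>UNIV. v$j * pd j f y)" by auto
  then show ?thesis using frechet_derivative_works assms by metis
qed

lemma pd_cong_open:
  assumes "open S" "y \<in> S" "\<And>z. z \<in> S \<Longrightarrow> f z = g z"
  shows "pd i f y = pd i g y"
proof -
  have "\<And>D. (f has_derivative D) (at y) \<longleftrightarrow> (g has_derivative D) (at y)"
    using has_derivative_transform_within_open assms by metis
  then show ?thesis unfolding pd_def frechet_derivative_def by simp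
qed

lemma pd_eq_0_if_eq_0_on_open:
  assumes "open S" "y \<in> S" "\<And>z. z \<in> S \<Longrightarrow> f z = 0"
  shows "pd i f y = 0"
proof -
  have "pd i f y = pd i (\<lambda>z. 0) y" by (rule pd_cong_open) (use assms in auto)
  also have "\<dots> = 0" by (rule pd_eq_if_has_derivative) simp
  finally show ?thesis .
qed

lemma pd_add:
  assumes "f differentiable at y" "g differentiable at y"
  shows "pd i (\<lambda>z. f z + g z) y = pd i f y + pd i g y"
  by (rule pd_eq_if_has_derivative)
    (use has_derivative_add[OF has_derivative_pd[OF assms(1)] has_derivative_pd[OF assms(2)]]
     in \<open>simp add: distrib_left sum.distrib\<close>)

lemma pd_diff:
  assumes "f differentiable at y" "g differentiable at y"
  shows "pd i (\<lambda>z. f z - g z) y = pd i f y - pd i g y"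
  by (rule pd_eq_if_has_derivative)
    (use has_derivative_diff[OF has_derivative_pd[OF assms(1)] has_derivative_pd[OF assms(2)]]
     in \<open>simp add: right_diff_distrib sum_subtractf\<close>)

lemma pd_mult:
  assumes "f differentiable at y" "g differentiable at y"
  shows "pd i (\<lambda>z. f z * g z) y = pd i f y * g y + f y * pd i g y"
  by (rule pd_eq_if_has_derivative)
    (use has_derivative_mult[OF has_derivative_pd[OF assms(1)] has_derivative_pd[OF assms(2)]]
     in \<open>simp add: algebra_simps sum.distrib sum_distrib_left\<close>)

lemma pd_sum:
  assumes "\<And>k. k \<in> K \<Longrightarrow> f k differentiable at y"
  shows "pd i (\<lambda>z. \<Sum>k\<in>K. f k z) y = (\<Sum>k\<in>K. pd i (f k) y)"
proof (rule pd_eq_if_has_derivative)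
  have "((\<lambda>z. \<Sum>k\<in>K. f k z) has_derivative (\<lambda>v. \<Sum>k\<in>K. \<Sum>j\<in>UNIV. v$j * pd j (f k) y)) (at y)"
    using has_derivative_sum[of K "\<lambda>k z. f k z", OF has_derivative_pd[OF assms]] by simp
  then show "((\<lambda>z. \<Sum>k\<in>K. f k z) has_derivative (\<lambda>v. \<Sum>j\<in>UNIV. v$j * (\<Sum>k\<in>K. pd j (f k) y))) (at y)"
    by (simp add: sum_distrib_left sum.swap[of _ K])
qed

lemma pd_const: "pd i (\<lambda>z. c) y = 0"
  by (rule pd_eq_if_has_derivative) simp

lemma pd_scale: "f differentiable at y \<Longrightarrow> pd i (\<lambda>z. c * f z) y = c * pd i f y"
  using pd_mult[of "\<lambda>z. c" y f i] by (simp add: pd_const)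

lemma pd_component:
  fixes y :: "real^'n::finite"
  shows "pd i (\<lambda>z. z$k) y = (if i = k then 1 else 0)"
proof (rule pd_eq_if_has_derivative)
  have "((\<lambda>z. z$k) has_derivative (\<lambda>v. v$k)) (at y)"
    by (rule bounded_linear_imp_has_derivative[OF bounded_linear_vec_nth])
  moreover have "\<And>(v::real^'n) j. v$j * (if j = k then 1 else 0) = (if j = k then v$k else 0)"
    by simp
  ultimately show "((\<lambda>z. z$k) has_derivative (\<lambda>v. \<Sum>j\<in>UNIV. v$j * (if j = k then 1 else 0))) (at y)"
    by simp
qed

lemma pd_inner_self:
  fixes y :: "real^'n::finite"
  shows "pd i (\<lambda>z. z \<bullet> z) y = 2 * y$i"
proof (rule pd_eq_if_has_derivative)
  have "((\<lambda>z. z \<bullet> z) has_derivative (\<lambda>v. y \<bullet> v + v \<bullet> y)) (at y)"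
    by (auto intro!: derivative_eq_intros)
  moreover have "(\<lambda>v. y \<bullet> v + v \<bullet> y) = (\<lambda>v. \<Sum>j\<in>UNIV. v$j * (2 * y$j))"
    by (rule ext) (simp add: inner_commute[of y] inner_vec_def sum_distrib_left algebra_simps)
  ultimately show "((\<lambda>z. z \<bullet> z) has_derivative (\<lambda>v. \<Sum>j\<in>UNIV. v$j * (2 * y$j))) (at y)"
    by simp
qed

lemma has_real_derivative_along_line:
  assumes "(g has_derivative (\<lambda>v. \<Sum>j\<in>UNIV. v$j * D j)) (at (p + t *\<^sub>R w))"
  shows "((\<lambda>s. g (p + s *\<^sub>R w)) has_real_derivative (\<Sum>j\<in>UNIV. w$j * D j)) (at t)"
proof -
  have "((\<lambda>s. p + s *\<^sub>R w) has_derivative (\<lambda>s. s *\<^sub>R w)) (at t)"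
    by (auto intro!: derivative_eq_intros)
  from has_derivative_compose[OF this assms]
  have "((\<lambda>s. g (p + s *\<^sub>R w)) has_derivative (\<lambda>s. s * (\<Sum>j\<in>UNIV. w$j * D j))) (at t)"
    by (simp add: o_def sum_distrib_left algebra_simps)
  moreover have "(\<lambda>s. s * (\<Sum>j\<in>UNIV. w$j * D j)) = (*) (\<Sum>j\<in>UNIV. w$j * D j)"
    by (rule ext) simp
  ultimately show ?thesis unfolding has_field_derivative_def by metis
qed

lemma sum_add_axis_diff:
  "(\<Sum>k\<in>UNIV. (v + h *\<^sub>R axis j 1)$k * D k) - (\<Sum>k\<in>UNIV. v$k * D k) = h * D j"
proof -
  have "(\<Sum>k\<in>UNIV. (v + h *\<^sub>R axis j 1)$k * D k) = (\<Sum>k\<in>UNIV. v$k * D k) + h * (\<Sum>k\<in>UNIV. (axis j 1)$k * D k)"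
    by (simp add: algebra_simps sum.distrib sum_distrib_left)
  then show ?thesis by (simp add: sum_axis_mult)
qed

definition second_difference :: "(real^'n::finite \<Rightarrow> real) \<Rightarrow> real^'n \<Rightarrow> 'n \<Rightarrow> 'n \<Rightarrow> real \<Rightarrow> real" where
  "second_difference f y i j h =
     f (y + h *\<^sub>R axis i 1 + h *\<^sub>R axis j 1) - f (y + h *\<^sub>R axis i 1) - f (y + h *\<^sub>R axis j 1) + f y"

lemma second_difference_commute: "second_difference f y i j h = second_difference f y j i h"
  by (simp add: second_difference_def algebra_simps)

lemma second_difference_mean_value:
  fixes f :: "real^'n::finite \<Rightarrow> real"
  assumes h: "0 < h" and df: "\<And>z. norm (z - y) \<le> 2 * h \<Longrightarrow> f differentiable at z"
  obtains \<xi> where "0 < \<xi>" "\<xi> < h"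
    "second_difference f y i j h
       = h * (pd i f (y + \<xi> *\<^sub>R axis i 1 + h *\<^sub>R axis j 1) - pd i f (y + \<xi> *\<^sub>R axis i 1))"
proof -
  define \<phi> where "\<phi> = (\<lambda>s. f (y + h *\<^sub>R axis j 1 + s *\<^sub>R axis i 1) - f (y + s *\<^sub>R axis i 1))"
  have near: "norm ((y + t *\<^sub>R axis j 1 + s *\<^sub>R axis i 1) - y) \<le> 2 * h"
    if "0 \<le> s" "s \<le> h" "0 \<le> t" "t \<le> h" for s t
    using norm_triangle_ineq[of "t *\<^sub>R axis j (1::real)" "s *\<^sub>R axis i 1"] that by simp
  have along: "DERIV (\<lambda>s. f (p + s *\<^sub>R axis i 1)) s :> pd i f (p + s *\<^sub>R axis i 1)"
    if "f differentiable at (p + s *\<^sub>R axis i 1)" for p s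
    using has_real_derivative_along_line[OF has_derivative_pd[OF that]] by (simp add: sum_axis_mult)
  have der: "DERIV \<phi> s :> pd i f (y + h *\<^sub>R axis j 1 + s *\<^sub>R axis i 1) - pd i f (y + s *\<^sub>R axis i 1)"
    if "0 \<le> s" "s \<le> h" for s
    unfolding \<phi>_def using near[of s h] near[of s 0] that h by (intro DERIV_diff along df) auto
  obtain \<xi> where "0 < \<xi>" "\<xi> < h" "\<phi> h - \<phi> 0
      = (h - 0) * (pd i f (y + h *\<^sub>R axis j 1 + \<xi> *\<^sub>R axis i 1) - pd i f (y + \<xi> *\<^sub>R axis i 1))"
    using MVT2[OF h, of \<phi>, OF der] by auto
  then show ?thesis by (intro that) (auto simp: \<phi>_def second_difference_def algebra_simps)
qed

lemma second_difference_approx: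
  fixes f :: "real^'n::finite \<Rightarrow> real"
  assumes S: "open S" "y \<in> S" and df: "\<forall>z\<in>S. f differentiable at z"
    and dg: "pd i f differentiable at y" and e: "e > 0"
  shows "\<exists>d>0. \<forall>h. 0 < h \<and> h < d \<longrightarrow>
     \<bar>second_difference f y i j h - h\<^sup>2 * pd j (pd i f) y\<bar> \<le> e * h\<^sup>2"
proof -
  define g where "g = pd i f"
  define L where "L = (\<lambda>v::real^'n. \<Sum>k\<in>UNIV. v$k * pd k g y)"
  have "(g has_derivative L) (at y)" unfolding L_def g_def using has_derivative_pd[OF dg] .
  then obtain d1 where d1: "d1 > 0"
    "\<And>x. norm (x - y) < d1 \<Longrightarrow> norm (g x - g y - L (x - y)) \<le> (e/3) * norm (x - y)"
    unfolding has_derivative_at_alt using e by (meson divide_pos_pos zero_less_numeral)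
  obtain d0 where d0: "d0 > 0" "ball y d0 \<subseteq> S" using S openE by blast
  have "\<bar>second_difference f y i j h - h\<^sup>2 * pd j g y\<bar> \<le> e * h\<^sup>2"
    if h: "0 < h" "2 * h < d0" "2 * h < d1" for h
  proof -
    have "f differentiable at z" if "norm (z - y) \<le> 2 * h" for z
    proof -
      have "z \<in> ball y d0" using that h by (simp add: dist_norm norm_minus_commute)
      then show ?thesis using df d0 by blast
    qed
    then obtain \<xi> where \<xi>: "0 < \<xi>" "\<xi> < h"
      "second_difference f y i j h = h * (g (y + \<xi> *\<^sub>R axis i 1 + h *\<^sub>R axis j 1) - g (y + \<xi> *\<^sub>R axis i 1))"
      using second_difference_mean_value[OF h(1)] unfolding g_def by blast
    define v1 where "v1 = \<xi> *\<^sub>R axis i (1::real) + h *\<^sub>R axis j 1"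
    define v2 where "v2 = \<xi> *\<^sub>R axis i (1::real)"
    have n1: "norm v1 \<le> 2 * h"
      using norm_triangle_ineq[of "\<xi> *\<^sub>R axis i (1::real)" "h *\<^sub>R axis j 1"] \<xi> h by (simp add: v1_def)
    have n2: "norm v2 \<le> h" using \<xi> by (simp add: v2_def)
    have "\<bar>g (y + v1) - g y - L v1\<bar> \<le> (e/3) * norm v1"
      using d1(2)[of "y + v1"] n1 h by simp
    moreover have "\<bar>g (y + v2) - g y - L v2\<bar> \<le> (e/3) * norm v2"
      using d1(2)[of "y + v2"] n2 h by simp
    moreover have "L v1 - L v2 = h * pd j g y"
      unfolding L_def v1_def v2_def by (rule sum_add_axis_diff)
    ultimately have "\<bar>g (y + v1) - g (y + v2) - h * pd j g y\<bar> \<le> (e/3) * norm v1 + (e/3) * norm v2"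
      by linarith
    also have "\<dots> \<le> (e/3) * (2 * h) + (e/3) * h"
      using n1 n2 e by (intro add_mono mult_left_mono) auto
    also have "\<dots> = e * h" by simp
    finally have est: "\<bar>g (y + v1) - g (y + v2) - h * pd j g y\<bar> \<le> e * h" .
    have "second_difference f y i j h - h\<^sup>2 * pd j g y = h * (g (y + v1) - g (y + v2) - h * pd j g y)"
      using \<xi>(3) by (simp add: v1_def v2_def power2_eq_square algebra_simps)
    then have "\<bar>second_difference f y i j h - h\<^sup>2 * pd j g y\<bar> = h * \<bar>g (y + v1) - g (y + v2) - h * pd j g y\<bar>"
      using h by (simp add: abs_mult)
    also have "\<dots> \<le> h * (e * h)" using est h by (intro mult_left_mono) auto
    finally show ?thesis by (simp add: power2_eq_square algebra_simps)
  qed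
  then show ?thesis
    unfolding g_def by (intro exI[of _ "min d0 d1 / 2"]) (auto simp: d0 d1)
qed

lemma pd_commute:
  fixes f :: "real^'n::finite \<Rightarrow> real"
  assumes S: "open S" "y \<in> S" and df: "\<forall>z\<in>S. f differentiable at z"
    and di: "pd i f differentiable at y" and dj: "pd j f differentiable at y"
  shows "pd j (pd i f) y = pd i (pd j f) y"
proof (rule ccontr)
  let ?a = "pd j (pd i f) y" and ?b = "pd i (pd j f) y"
  assume "?a \<noteq> ?b"
  then have e: "\<bar>?a - ?b\<bar> / 4 > 0" by simp
  obtain d1 where d1: "d1 > 0" "\<forall>h. 0 < h \<and> h < d1 \<longrightarrow>
      \<bar>second_difference f y i j h - h\<^sup>2 * ?a\<bar> \<le> \<bar>?a - ?b\<bar> / 4 * h\<^sup>2"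
    using second_difference_approx[OF S df di e] by blast
  obtain d2 where d2: "d2 > 0" "\<forall>h. 0 < h \<and> h < d2 \<longrightarrow>
      \<bar>second_difference f y i j h - h\<^sup>2 * ?b\<bar> \<le> \<bar>?a - ?b\<bar> / 4 * h\<^sup>2"
    using second_difference_approx[OF S df dj e] by (auto simp: second_difference_commute)
  define h where "h = min d1 d2 / 2"
  have h: "0 < h" "h < d1" "h < d2" using d1 d2 by (auto simp: h_def)
  then have "\<bar>second_difference f y i j h - h\<^sup>2 * ?a\<bar> \<le> \<bar>?a - ?b\<bar> / 4 * h\<^sup>2"
    and "\<bar>second_difference f y i j h - h\<^sup>2 * ?b\<bar> \<le> \<bar>?a - ?b\<bar> / 4 * h\<^sup>2"
    using d1 d2 by blast+
  then have "\<bar>h\<^sup>2 * ?a - h\<^sup>2 * ?b\<bar> \<le> \<bar>?a - ?b\<bar> / 2 * h\<^sup>2" by linarith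
  then have "h\<^sup>2 * \<bar>?a - ?b\<bar> \<le> h\<^sup>2 * (\<bar>?a - ?b\<bar> / 2)"
    by (simp add: abs_mult right_diff_distrib[symmetric] mult.commute)
  then have "\<bar>?a - ?b\<bar> \<le> \<bar>?a - ?b\<bar> / 2" using h by simp
  then show False using e by simp
qed

section \<open>Smooth functions\<close>

lemma higher_partial_pd_imp_higher_partial:
  "higher_partial (pd i f) g \<Longrightarrow> higher_partial f g"
  by (induction rule: higher_partial.induct) (auto intro: higher_partial.intros)

lemma smooth_on_pd: "smooth_on S f \<Longrightarrow> smooth_on S (pd i f)"
  unfolding smooth_on_def using higher_partial_pd_imp_higher_partial by blast

lemma smooth_on_imp_differentiable: "smooth_on S f \<Longrightarrow> y \<in> S \<Longrightarrow> f differentiable at y"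
  unfolding smooth_on_def using higher_partial.base by blast

lemma smooth_on_has_derivative_pd:
  "smooth_on S f \<Longrightarrow> y \<in> S \<Longrightarrow> (f has_derivative (\<lambda>v. \<Sum>j\<in>UNIV. v$j * pd j f y)) (at y)"
  using smooth_on_imp_differentiable has_derivative_pd by blast

lemma smooth_on_pd_commute:
  assumes "open S" "smooth_on S f" "y \<in> S"
  shows "pd j (pd i f) y = pd i (pd j f) y"
  by (rule pd_commute[OF assms(1,3)])
    (use assms in \<open>auto intro: smooth_on_imp_differentiable smooth_on_pd\<close>)

lemma smooth_on_coinduct:
  assumes S: "open S" and "P f"
    and closed: "\<And>g. P g \<Longrightarrow> (\<forall>y\<in>S. g differentiable at y) \<and> (\<forall>i. \<exists>h. P h \<and> (\<forall>y\<in>S. pd i g y = h y))"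
  shows "smooth_on S f"
proof -
  have "\<exists>h. P h \<and> (\<forall>y\<in>S. g y = h y)" if "higher_partial f g" for g
    using that
  proof induction
    case base
    then show ?case using \<open>P f\<close> by blast
  next
    case (step g i)
    then obtain h where "P h" "\<forall>y\<in>S. g y = h y" by blast
    moreover obtain h' where "P h'" "\<forall>y\<in>S. pd i h y = h' y" using closed[OF \<open>P h\<close>] by blast
    ultimately have "\<forall>y\<in>S. pd i g y = h' y" using pd_cong_open[OF S] by metis
    then show ?case using \<open>P h'\<close> by blast
  qed
  moreover have "g differentiable at y" if "y \<in> S" "\<forall>y\<in>S. g y = h y" "P h" for g h y
  proof -
    have "h differentiable at y" using closed[OF \<open>P h\<close>] \<open>y \<in> S\<close> by blast
    then obtain D where "(h has_derivative D) (at y)" unfolding differentiable_def by blast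
    then have "(g has_derivative D) (at y)"
      by (rule has_derivative_transform_within_open[OF _ S \<open>y \<in> S\<close>]) (use that in auto)
    then show ?thesis unfolding differentiable_def by blast
  qed
  ultimately show ?thesis unfolding smooth_on_def by blast
qed

inductive smooth_algebra :: "(real^'n::finite) set \<Rightarrow> (real^'n \<Rightarrow> real) \<Rightarrow> bool"
  for S where
  smooth: "smooth_on S f \<Longrightarrow> smooth_algebra S f"
| add: "smooth_algebra S f \<Longrightarrow> smooth_algebra S g \<Longrightarrow> smooth_algebra S (\<lambda>z. f z + g z)"
| mult: "smooth_algebra S f \<Longrightarrow> smooth_algebra S g \<Longrightarrow> smooth_algebra S (\<lambda>z. f z * g z)"

lemma smooth_algebra_pd:
  assumes "smooth_algebra S g" "open S"
  shows "(\<forall>y\<in>S. g differentiable at y) \<and> (\<forall>i. \<exists>h. smooth_algebra S h \<and> (\<forall>y\<in>S. pd i g y = h y))"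
  using assms(1)
proof induction
  case (smooth f)
  then show ?case by (blast intro: smooth_on_imp_differentiable smooth_on_pd smooth_algebra.smooth)
next
  case (add f g)
  show ?case
  proof (intro conjI allI)
    show "\<forall>y\<in>S. (\<lambda>z. f z + g z) differentiable at y" using add.IH by auto
    fix i
    obtain hf hg where "smooth_algebra S hf" "\<forall>y\<in>S. pd i f y = hf y"
      "smooth_algebra S hg" "\<forall>y\<in>S. pd i g y = hg y" using add.IH by metis
    then show "\<exists>h. smooth_algebra S h \<and> (\<forall>y\<in>S. pd i (\<lambda>z. f z + g z) y = h y)"
      using add.IH by (intro exI[of _ "\<lambda>z. hf z + hg z"]) (auto simp: pd_add intro: smooth_algebra.add)
  qed
next
  case (mult f g)
  show ?case
  proof (intro conjI allI)
    show "\<forall>y\<in>S. (\<lambda>z. f z * g z) differentiable at y" using mult.IH by auto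
    fix i
    obtain hf hg where "smooth_algebra S hf" "\<forall>y\<in>S. pd i f y = hf y"
      "smooth_algebra S hg" "\<forall>y\<in>S. pd i g y = hg y" using mult.IH by metis
    then show "\<exists>h. smooth_algebra S h \<and> (\<forall>y\<in>S. pd i (\<lambda>z. f z * g z) y = h y)"
      using mult.IH mult.hyps
      by (intro exI[of _ "\<lambda>z. hf z * g z + f z * hg z"]) (auto simp: pd_mult intro: smooth_algebra.intros)
  qed
qed

lemma smooth_on_smooth_algebra: "open S \<Longrightarrow> smooth_algebra S f \<Longrightarrow> smooth_on S f"
  by (rule smooth_on_coinduct[where P = "smooth_algebra S"]) (simp_all add: smooth_algebra_pd)

lemma smooth_on_add:
  "open S \<Longrightarrow> smooth_on S f \<Longrightarrow> smooth_on S g \<Longrightarrow> smooth_on S (\<lambda>z. f z + g z)"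
  by (simp add: smooth_on_smooth_algebra smooth_algebra.add smooth_algebra.smooth)

lemma smooth_on_mult:
  "open S \<Longrightarrow> smooth_on S f \<Longrightarrow> smooth_on S g \<Longrightarrow> smooth_on S (\<lambda>z. f z * g z)"
  by (simp add: smooth_on_smooth_algebra smooth_algebra.mult smooth_algebra.smooth)

lemma smooth_on_const: "smooth_on S (\<lambda>z. c)"
proof -
  have "higher_partial (\<lambda>z. c) g \<Longrightarrow> g = (\<lambda>z. 0) \<or> g = (\<lambda>z. c)" for g
    by (induction rule: higher_partial.induct) (auto simp: pd_const)
  then show ?thesis unfolding smooth_on_def by fastforce
qed

lemma smooth_on_component: "smooth_on S (\<lambda>z. z$k)"
proof -
  have "higher_partial (\<lambda>z. z$k) g \<Longrightarrow> g = (\<lambda>z. z$k) \<or> (\<exists>c. g = (\<lambda>z. c))" for g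
    by (induction rule: higher_partial.induct) (auto simp: pd_component pd_const)
  then show ?thesis unfolding smooth_on_def
    using bounded_linear_vec_nth bounded_linear_imp_differentiable by fastforce
qed

lemma smooth_on_sum:
  assumes "open S" "\<And>k. k \<in> K \<Longrightarrow> smooth_on S (f k)"
  shows "smooth_on S (\<lambda>z. \<Sum>k\<in>K. f k z)"
  using assms(2)
proof (induction K rule: infinite_finite_induct)
  case (insert k K)
  then show ?case by (simp add: smooth_on_add[OF assms(1)])
qed (simp_all add: smooth_on_const)

lemma smooth_on_inner_self: "open S \<Longrightarrow> smooth_on S (\<lambda>z::real^'n::finite. z \<bullet> z)"
  unfolding inner_vec_def inner_real_def
  by (rule smooth_on_sum) (simp_all add: smooth_on_mult smooth_on_component)

section \<open>Laplacian and homogeneity\<close>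

definition laplacian :: "(real^'n::finite \<Rightarrow> real) \<Rightarrow> real^'n \<Rightarrow> real" where
  "laplacian f y = (\<Sum>i\<in>UNIV. pd i (pd i f) y)"

lemma laplacian_pd:
  assumes S: "open S" and sm: "smooth_on S f" and harm: "\<And>z. z \<in> S \<Longrightarrow> laplacian f z = 0"
    and y: "y \<in> S"
  shows "laplacian (pd k f) y = 0"
proof -
  have "pd i (pd i (pd k f)) y = pd k (pd i (pd i f)) y" for i
  proof -
    have "pd i (pd i (pd k f)) y = pd i (pd k (pd i f)) y"
      by (rule pd_cong_open[OF S y]) (use smooth_on_pd_commute[OF S sm] in auto)
    also have "\<dots> = pd k (pd i (pd i f)) y"
      using smooth_on_pd_commute[OF S smooth_on_pd[OF sm] y] by simp
    finally show ?thesis .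
  qed
  then have "laplacian (pd k f) y = (\<Sum>i\<in>UNIV. pd k (pd i (pd i f)) y)"
    by (simp add: laplacian_def)
  also have "\<dots> = pd k (laplacian f) y"
    unfolding laplacian_def
    by (rule pd_sum[symmetric]) (use sm y in \<open>blast intro: smooth_on_pd smooth_on_imp_differentiable\<close>)
  also have "\<dots> = 0" by (rule pd_eq_0_if_eq_0_on_open[OF S y harm])
  finally show ?thesis .
qed

lemma laplacian_scale:
  assumes S: "open S" and sm: "smooth_on S f" and y: "y \<in> S"
  shows "laplacian (\<lambda>z. c * f z) y = c * laplacian f y"
proof -
  have "pd i (pd i (\<lambda>z. c * f z)) y = c * pd i (pd i f) y" for i
  proof -
    have "pd i (pd i (\<lambda>z. c * f z)) y = pd i (\<lambda>z. c * pd i f z) y"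
      by (rule pd_cong_open[OF S y]) (simp add: pd_scale smooth_on_imp_differentiable[OF sm])
    also have "\<dots> = c * pd i (pd i f) y"
      by (simp add: pd_scale smooth_on_imp_differentiable[OF smooth_on_pd[OF sm] y])
    finally show ?thesis .
  qed
  then show ?thesis by (simp add: laplacian_def sum_distrib_left)
qed

lemma laplacian_inner_self_mult:
  fixes f :: "real^'n::finite \<Rightarrow> real"
  assumes S: "open S" and sm: "smooth_on S f" and y: "y \<in> S"
  shows "laplacian (\<lambda>z. (z \<bullet> z) * f z) y
    = 2 * CARD('n) * f y + 4 * (\<Sum>i\<in>UNIV. y$i * pd i f y) + (y \<bullet> y) * laplacian f y"
proof -
  have diff: "g differentiable at y" if "smooth_on S g" for g
    using smooth_on_imp_differentiable[OF that y] .
  have sm_pd: "smooth_on S (pd i f)" for i using smooth_on_pd[OF sm] .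
  have sm_norm: "smooth_on S (\<lambda>z. z \<bullet> z)" using smooth_on_inner_self[OF S] .
  have pd_norm_mult: "pd i (\<lambda>z. (z \<bullet> z) * g z) x = 2 * (x$i * g x) + (x \<bullet> x) * pd i g x"
    if "smooth_on S g" "x \<in> S" for g i x
    using pd_mult[OF smooth_on_imp_differentiable[OF sm_norm \<open>x \<in> S\<close>]
        smooth_on_imp_differentiable[OF that]] by (simp add: pd_inner_self)
  have "pd i (pd i (\<lambda>z. (z \<bullet> z) * f z)) y = 2 * f y + 4 * (y$i * pd i f y) + (y \<bullet> y) * pd i (pd i f) y"
    for i
  proof -
    have "pd i (pd i (\<lambda>z. (z \<bullet> z) * f z)) y = pd i (\<lambda>z. 2 * (z$i * f z) + (z \<bullet> z) * pd i f z) y"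
      by (rule pd_cong_open[OF S y]) (simp add: pd_norm_mult[OF sm])
    also have "\<dots> = 2 * pd i (\<lambda>z. z$i * f z) y + pd i (\<lambda>z. (z \<bullet> z) * pd i f z) y"
      by (simp add: pd_add pd_scale diff smooth_on_mult smooth_on_component sm sm_pd sm_norm S)
    also have "\<dots> = 2 * (f y + y$i * pd i f y) + (2 * (y$i * pd i f y) + (y \<bullet> y) * pd i (pd i f) y)"
      by (simp add: pd_mult pd_component diff smooth_on_component sm pd_norm_mult[OF sm_pd y])
    finally show ?thesis by simp
  qed
  then show ?thesis
    by (simp add: laplacian_def sum.distrib sum_distrib_left)
qed

definition homogeneous :: "real \<Rightarrow> (real^'n::finite \<Rightarrow> real) \<Rightarrow> bool" where
  "homogeneous r f \<longleftrightarrow> (\<forall>t y. 0 < t \<longrightarrow> y \<noteq> 0 \<longrightarrow> f (t *\<^sub>R y) = t powr r * f y)"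

lemma homogeneous_pd:
  fixes f :: "real^'n::finite \<Rightarrow> real"
  assumes df: "\<And>y. y \<noteq> 0 \<Longrightarrow> f differentiable at y" and hom: "homogeneous r f"
  shows "homogeneous (r - 1) (pd i f)"
  unfolding homogeneous_def
proof (intro allI impI)
  fix t :: real and y :: "real^'n" assume t: "t > 0" and y: "y \<noteq> 0"
  have ty: "t *\<^sub>R y \<noteq> 0" using t y by simp
  have "((\<lambda>z. t *\<^sub>R z) has_derivative (\<lambda>v. t *\<^sub>R v)) (at y)" by (auto intro!: derivative_eq_intros)
  from has_derivative_compose[OF this has_derivative_pd[OF df[OF ty]]]
  have "((\<lambda>z. f (t *\<^sub>R z)) has_derivative (\<lambda>v. \<Sum>j\<in>UNIV. v$j * (t * pd j f (t *\<^sub>R y)))) (at y)"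
    by (simp add: o_def algebra_simps)
  then have "t * pd i f (t *\<^sub>R y) = pd i (\<lambda>z. f (t *\<^sub>R z)) y"
    by (rule pd_eq_if_has_derivative[symmetric])
  also have "\<dots> = pd i (\<lambda>z. t powr r * f z) y"
    by (rule pd_cong_open[of "UNIV - {0}"]) (use y hom t in \<open>auto simp: homogeneous_def\<close>)
  also have "\<dots> = t * (t powr (r - 1) * pd i f y)"
    using pd_scale[OF df[OF y]] t by (simp add: powr_diff)
  finally show "pd i f (t *\<^sub>R y) = t powr (r - 1) * pd i f y" using t by simp
qed

lemma homogeneous_euler:
  fixes f :: "real^'n::finite \<Rightarrow> real"
  assumes df: "\<And>y. y \<noteq> 0 \<Longrightarrow> f differentiable at y" and hom: "homogeneous r f"
    and y: "y \<noteq> 0"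
  shows "(\<Sum>i\<in>UNIV. y$i * pd i f y) = r * f y"
proof -
  have "DERIV (\<lambda>s. f (0 + s *\<^sub>R y)) 1 :> (\<Sum>i\<in>UNIV. y$i * pd i f (0 + 1 *\<^sub>R y))"
    by (rule has_real_derivative_along_line) (use has_derivative_pd df y in auto)
  then have D1: "DERIV (\<lambda>s. f (s *\<^sub>R y)) 1 :> (\<Sum>i\<in>UNIV. y$i * pd i f y)" by simp
  have D2: "DERIV (\<lambda>s. s powr r * f y) 1 :> r * f y"
    by (auto intro!: derivative_eq_intros)
  have D3: "DERIV (\<lambda>s. f (s *\<^sub>R y)) 1 :> r * f y"
    by (rule has_field_derivative_transform_within_open[OF D2, of "{0<..}"])
      (use hom y in \<open>auto simp: homogeneous_def\<close>)
  show ?thesis using DERIV_unique[OF D1 D3] .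
qed

section \<open>Homogeneous harmonic functions on the punctured space\<close>

definition hessian_form :: "(real^'n::finite \<Rightarrow> real) \<Rightarrow> real^'n \<Rightarrow> real^'n \<Rightarrow> real" where
  "hessian_form f p w = (\<Sum>i\<in>UNIV. w$i * (\<Sum>j\<in>UNIV. w$j * pd j (pd i f) p))"

lemma local_max_second_derivative_nonpos:
  fixes k k' :: "real \<Rightarrow> real"
  assumes d: "\<delta> > 0" and le: "\<And>s. \<bar>s\<bar> < \<delta> \<Longrightarrow> k s \<le> 0" and k0: "k 0 = 0"
    and dk: "\<And>s. \<bar>s\<bar> < \<delta> \<Longrightarrow> DERIV k s :> k' s" and dk': "DERIV k' 0 :> c"
  shows "c \<le> 0"
proof (rule ccontr)
  assume "\<not> c \<le> 0"
  then have c: "c > 0" by simp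
  have "\<forall>y. \<bar>0 - y\<bar> < \<delta> \<longrightarrow> k y \<le> k 0" using le k0 by auto
  then have k'0: "k' 0 = 0"
    using DERIV_local_max[OF dk d] d by simp
  obtain d' where d': "d' > 0" "\<forall>h>0. h < d' \<longrightarrow> k' 0 < k' (0 + h)"
    using DERIV_pos_inc_right[OF dk' c] by blast
  define h where "h = min \<delta> d' / 2"
  have h: "0 < h" "h < \<delta>" "h < d'" using d d' by (auto simp: h_def)
  obtain z where z: "0 < z" "z < h" "k h - k 0 = (h - 0) * k' z"
    using MVT2[OF h(1), of k k'] dk h by force
  have "k' z > 0" using d'(2)[rule_format, of z] z h k'0 by auto
  then have "k h > 0" using z h k0 by simp
  moreover have "k h \<le> 0" using le h by auto
  ultimately show False by simp
qed

lemma hessian_form_le_majorant: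
  fixes f :: "real^'n::finite \<Rightarrow> real"
  assumes df: "\<And>s. \<bar>s\<bar> < \<delta> \<Longrightarrow> f differentiable at (p + s *\<^sub>R w)"
    and dpd: "\<And>i. pd i f differentiable at p"
    and d: "\<delta> > 0"
    and le: "\<And>s. \<bar>s\<bar> < \<delta> \<Longrightarrow> f (p + s *\<^sub>R w) \<le> \<phi> s" and \<phi>0: "\<phi> 0 = f p"
    and d\<phi>: "\<And>s. \<bar>s\<bar> < \<delta> \<Longrightarrow> DERIV \<phi> s :> \<psi> s" and d\<psi>: "DERIV \<psi> 0 :> c"
  shows "hessian_form f p w \<le> c"
proof -
  define k' where "k' = (\<lambda>s. (\<Sum>i\<in>UNIV. w$i * pd i f (p + s *\<^sub>R w)) - \<psi> s)"
  have dk: "DERIV (\<lambda>s. f (p + s *\<^sub>R w) - \<phi> s) s :> k' s" if "\<bar>s\<bar> < \<delta>" for s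
    unfolding k'_def
    by (rule DERIV_diff[OF has_real_derivative_along_line[OF has_derivative_pd] d\<phi>])
      (use df that in auto)
  have "DERIV (\<lambda>s. pd i f (p + s *\<^sub>R w)) 0 :> (\<Sum>j\<in>UNIV. w$j * pd j (pd i f) p)" for i
    using has_real_derivative_along_line[of "pd i f" "\<lambda>j. pd j (pd i f) p" p 0 w]
      has_derivative_pd[OF dpd] by simp
  then have "DERIV (\<lambda>s. \<Sum>i\<in>UNIV. w$i * pd i f (p + s *\<^sub>R w)) 0 :> hessian_form f p w"
    unfolding hessian_form_def by (intro DERIV_sum DERIV_cmult)
  then have dk': "DERIV k' 0 :> hessian_form f p w - c"
    unfolding k'_def using DERIV_diff d\<psi> by blast
  have "hessian_form f p w - c \<le> 0"
    by (rule local_max_second_derivative_nonpos[OF d _ _ dk dk']) (use le \<phi>0 in auto)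
  then show ?thesis by simp
qed

lemma homogeneous_sphere_max:
  fixes f :: "real^'n::finite \<Rightarrow> real"
  assumes cont: "continuous_on (UNIV - {0}) f" and hom: "homogeneous r f"
  obtains p where "norm p = 1" "\<And>z. z \<noteq> 0 \<Longrightarrow> f z \<le> norm z powr r * f p"
proof -
  have "continuous_on (sphere 0 1) f"
    by (rule continuous_on_subset[OF cont]) auto
  moreover have "sphere (0::real^'n) 1 \<noteq> {}" by simp
  ultimately obtain p where p: "p \<in> sphere 0 1" "\<forall>x\<in>sphere 0 1. f x \<le> f p"
    using continuous_attains_sup[OF compact_sphere] by metis
  have bound: "f z \<le> norm z powr r * f p" if z: "z \<noteq> 0" for z
  proof -
    define u where "u = (1 / norm z) *\<^sub>R z"
    have u: "norm u = 1" "u \<noteq> 0" using z by (auto simp: u_def)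
    have "f z = f (norm z *\<^sub>R u)" using z by (simp add: u_def)
    also have "\<dots> = norm z powr r * f u" using hom u z by (simp add: homogeneous_def)
    also have "\<dots> \<le> norm z powr r * f p" using p u by (intro mult_left_mono) auto
    finally show ?thesis .
  qed
  show ?thesis by (rule that[OF _ bound]) (use p in simp)
qed

lemma hessian_form_radial_le:
  fixes f :: "real^'n::finite \<Rightarrow> real"
  assumes sm: "smooth_on (UNIV - {0}) f" and hom: "homogeneous r f" and p: "p \<noteq> 0"
  shows "hessian_form f p p \<le> r * (r - 1) * f p"
proof (rule hessian_form_le_majorant[where \<delta> = 1 and \<phi> = "\<lambda>s. (1 + s) powr r * f p"
      and \<psi> = "\<lambda>s. r * (1 + s) powr (r - 1) * f p"])
  fix s :: real assume "\<bar>s\<bar> < 1"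
  then have s: "p + s *\<^sub>R p = (1 + s) *\<^sub>R p" "1 + s > 0" by (auto simp: algebra_simps)
  then show "f differentiable at (p + s *\<^sub>R p)"
    using sm p by (simp add: smooth_on_imp_differentiable)
  show "f (p + s *\<^sub>R p) \<le> (1 + s) powr r * f p" using s hom p by (simp add: homogeneous_def)
  show "DERIV (\<lambda>s. (1 + s) powr r * f p) s :> r * (1 + s) powr (r - 1) * f p"
    using s by (auto intro!: derivative_eq_intros simp: field_simps)
next
  show "DERIV (\<lambda>s. r * (1 + s) powr (r - 1) * f p) 0 :> r * (r - 1) * f p"
    by (auto intro!: derivative_eq_intros)
qed (use sm p in \<open>auto intro: smooth_on_imp_differentiable smooth_on_pd\<close>)

lemma hessian_form_tangent_le:
  fixes f :: "real^'n::finite \<Rightarrow> real"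
  assumes sm: "smooth_on (UNIV - {0}) f" and p: "norm p = 1"
    and bound: "\<And>z. z \<noteq> 0 \<Longrightarrow> f z \<le> norm z powr r * f p"
    and q: "q \<bullet> q = 1" "q \<bullet> p = 0"
  shows "hessian_form f p q \<le> r * f p"
proof (rule hessian_form_le_majorant[where \<delta> = 1 and \<phi> = "\<lambda>s. (1 + s\<^sup>2) powr (r/2) * f p"
      and \<psi> = "\<lambda>s. r/2 * (1 + s\<^sup>2) powr (r/2 - 1) * (2 * s) * f p"])
  fix s :: real
  have "p \<bullet> p = 1" using p by (simp add: norm_eq_1)
  then have "(p + s *\<^sub>R q) \<bullet> (p + s *\<^sub>R q) = 1 + s\<^sup>2"
    using q by (simp add: inner_add_left inner_add_right inner_commute power2_eq_square)
  then have norm: "norm (p + s *\<^sub>R q) = sqrt (1 + s\<^sup>2)" by (simp add: norm_eq_sqrt_inner)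
  moreover have "0 < 1 + s\<^sup>2" by (simp add: add_pos_nonneg)
  ultimately have nz: "p + s *\<^sub>R q \<noteq> 0" by auto
  then show "f differentiable at (p + s *\<^sub>R q)"
    using sm by (simp add: smooth_on_imp_differentiable)
  have "norm (p + s *\<^sub>R q) powr r = (1 + s\<^sup>2) powr (r/2)"
    unfolding norm by (simp add: powr_half_sqrt[symmetric] add_pos_nonneg powr_powr)
  then show "f (p + s *\<^sub>R q) \<le> (1 + s\<^sup>2) powr (r/2) * f p" using bound[OF nz] by simp
  show "DERIV (\<lambda>s. (1 + s\<^sup>2) powr (r/2) * f p) s :> r/2 * (1 + s\<^sup>2) powr (r/2 - 1) * (2 * s) * f p"
    using \<open>0 < 1 + s\<^sup>2\<close> by (auto intro!: derivative_eq_intros simp: field_simps)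
next
  show "DERIV (\<lambda>s. r/2 * (1 + s\<^sup>2) powr (r/2 - 1) * (2 * s) * f p) 0 :> r * f p"
    by (auto intro!: derivative_eq_intros simp: field_simps)
qed (use sm p in \<open>auto intro: smooth_on_imp_differentiable smooth_on_pd\<close>)

text \<open>Quaternion multiplication: p, frame_i p, frame_j p, frame_k p are pairwise orthogonal and
  of length |p|, so they give an orthonormal tangent frame at every point of the unit sphere.\<close>
definition frame_i :: "real^4 \<Rightarrow> real^4" where
  "frame_i p = (\<chi> i. if i = 1 then - p$2 else if i = 2 then p$1 else if i = 3 then - p$4 else p$3)"

definition frame_j :: "real^4 \<Rightarrow> real^4" where
  "frame_j p = (\<chi> i. if i = 1 then - p$3 else if i = 2 then p$4 else if i = 3 then p$1 else - p$2)"

definition frame_k :: "real^4 \<Rightarrow> real^4" where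
  "frame_k p = (\<chi> i. if i = 1 then - p$4 else if i = 2 then - p$3 else if i = 3 then p$2 else p$1)"

lemma frame_orthogonal:
  "frame_i p \<bullet> p = 0" "frame_j p \<bullet> p = 0" "frame_k p \<bullet> p = 0"
  "frame_i p \<bullet> frame_i p = p \<bullet> p" "frame_j p \<bullet> frame_j p = p \<bullet> p" "frame_k p \<bullet> frame_k p = p \<bullet> p"
  by (simp_all add: frame_i_def frame_j_def frame_k_def inner_vec_def sum_4 algebra_simps)

lemma hessian_form_frame_sum:
  "hessian_form f y p + hessian_form f y (frame_i p) + hessian_form f y (frame_j p)
     + hessian_form f y (frame_k p) = (p \<bullet> p) * laplacian f y"
  by (simp add: hessian_form_def laplacian_def frame_i_def frame_j_def frame_k_def
      inner_vec_def sum_4 algebra_simps)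

lemma homogeneous_harmonic_nonpos:
  fixes f :: "real^4 \<Rightarrow> real"
  assumes r: "-2 < r" "r < 0" and sm: "smooth_on (UNIV - {0}) f"
    and harm: "\<And>y. y \<noteq> 0 \<Longrightarrow> laplacian f y = 0" and hom: "homogeneous r f"
    and y: "y \<noteq> 0"
  shows "f y \<le> 0"
proof -
  have "continuous_on (UNIV - {0}) f"
    using sm by (auto intro!: continuous_at_imp_continuous_on differentiable_imp_continuous_within
        smooth_on_imp_differentiable)
  then obtain p where p: "norm p = 1" and bound: "\<And>z. z \<noteq> 0 \<Longrightarrow> f z \<le> norm z powr r * f p"
    using homogeneous_sphere_max hom by blast
  have pp: "p \<bullet> p = 1" and p0: "p \<noteq> 0" using p by (auto simp: norm_eq_1)
  have tangent: "hessian_form f p q \<le> r * f p" if "q \<bullet> q = 1" "q \<bullet> p = 0" for q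
    using hessian_form_tangent_le[OF sm p bound that] .
  have "0 = hessian_form f p p + hessian_form f p (frame_i p) + hessian_form f p (frame_j p)
     + hessian_form f p (frame_k p)"
    using hessian_form_frame_sum[of f p p] harm[OF p0] by simp
  also have "\<dots> \<le> r * (r - 1) * f p + r * f p + r * f p + r * f p"
    using hessian_form_radial_le[OF sm hom p0] tangent frame_orthogonal[of p] pp
    by (intro add_mono) auto
  finally have "0 \<le> (r * (r + 2)) * f p" by (simp add: algebra_simps)
  moreover have "r * (r + 2) < 0" using r by (simp add: mult_neg_pos)
  ultimately have "f p \<le> 0" by (metis leI mult_neg_pos not_less)
  then show ?thesis using bound[OF y] by (simp add: mult_nonneg_nonpos order_trans)
qed

lemma homogeneous_harmonic_eq_0:
  fixes f :: "real^4 \<Rightarrow> real"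
  assumes r: "-2 < r" "r < 0" and sm: "smooth_on (UNIV - {0}) f"
    and harm: "\<And>y. y \<noteq> 0 \<Longrightarrow> laplacian f y = 0" and hom: "homogeneous r f"
    and y: "y \<noteq> 0"
  shows "f y = 0"
proof -
  have S: "open (UNIV - {0::real^4})" by (simp add: open_Diff)
  have "- 1 * f y \<le> 0"
  proof (rule homogeneous_harmonic_nonpos[OF r _ _ _ y])
    show "smooth_on (UNIV - {0}) (\<lambda>z. - 1 * f z)"
      by (rule smooth_on_mult[OF S smooth_on_const sm])
    show "laplacian (\<lambda>z. - 1 * f z) z = 0" if "z \<noteq> 0" for z
      using laplacian_scale[OF S sm, of z "- 1"] harm[OF that] that by simp
    show "homogeneous r (\<lambda>z. - 1 * f z)" using hom by (simp add: homogeneous_def)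
  qed
  then show ?thesis using homogeneous_harmonic_nonpos[OF assms] by simp
qed

lemma homogeneous0_harmonic_odd_eq_0:
  fixes f :: "real^4 \<Rightarrow> real"
  assumes sm: "smooth_on (UNIV - {0}) f" and harm: "\<And>y. y \<noteq> 0 \<Longrightarrow> laplacian f y = 0"
    and hom: "homogeneous 0 f" and odd: "\<And>y. y \<noteq> 0 \<Longrightarrow> f (- y) = - f y"
    and y: "y \<noteq> 0"
  shows "f y = 0"
proof -
  have S: "open (UNIV - {0::real^4})" by (simp add: open_Diff)
  have df: "\<And>z. z \<noteq> 0 \<Longrightarrow> f differentiable at z" using sm by (simp add: smooth_on_imp_differentiable)
  have pd_0: "pd k f z = 0" if "z \<noteq> 0" for k z
    by (rule homogeneous_harmonic_eq_0[of "-1"])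
      (use that homogeneous_pd[OF df hom, of k] laplacian_pd[OF S sm] harm smooth_on_pd[OF sm] in auto)
  have "connected (UNIV - {0::real^4})"
    using path_connected_punctured_universe[of "0::real^4"] path_connected_imp_connected
    by (simp add: Compl_eq_Diff_UNIV)
  then have "f y = f (- y)"
    by (rule has_derivative_zero_unique_connected[OF S])
      (use y pd_0 smooth_on_has_derivative_pd[OF sm] in auto)
  then show ?thesis using odd y by simp
qed

lemma homogeneous_neg2_harmonic_odd_eq_0:
  fixes f :: "real^4 \<Rightarrow> real"
  assumes sm: "smooth_on (UNIV - {0}) f" and harm: "\<And>y. y \<noteq> 0 \<Longrightarrow> laplacian f y = 0"
    and hom: "homogeneous (-2) f" and odd: "\<And>y. y \<noteq> 0 \<Longrightarrow> f (- y) = - f y"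
    and y: "y \<noteq> 0"
  shows "f y = 0"
proof -
  have S: "open (UNIV - {0::real^4})" by (simp add: open_Diff)
  have df: "\<And>z. z \<noteq> 0 \<Longrightarrow> f differentiable at z" using sm by (simp add: smooth_on_imp_differentiable)
  have "(y \<bullet> y) * f y = 0"
  proof (rule homogeneous0_harmonic_odd_eq_0[OF _ _ _ _ y])
    show "smooth_on (UNIV - {0}) (\<lambda>z. (z \<bullet> z) * f z)"
      by (rule smooth_on_mult[OF S smooth_on_inner_self[OF S] sm])
    show "laplacian (\<lambda>z. (z \<bullet> z) * f z) z = 0" if "z \<noteq> 0" for z
      using laplacian_inner_self_mult[OF S sm, of z] homogeneous_euler[OF df hom that] harm[OF that] that
      by simp
    show "homogeneous 0 (\<lambda>z. (z \<bullet> z) * f z)"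
      using hom by (simp add: homogeneous_def powr_minus power2_eq_square field_simps)
    show "(- z \<bullet> - z) * f (- z) = - ((z \<bullet> z) * f z)" if "z \<noteq> 0" for z
      using odd[OF that] by simp
  qed
  then show ?thesis using y by simp
qed

lemma homogeneous_harmonic_odd_eq_0:
  fixes f :: "real^4 \<Rightarrow> real"
  assumes r: "-2 \<le> r" "r \<le> 0" and sm: "smooth_on (UNIV - {0}) f"
    and harm: "\<And>y. y \<noteq> 0 \<Longrightarrow> laplacian f y = 0" and hom: "homogeneous r f"
    and odd: "\<And>y. y \<noteq> 0 \<Longrightarrow> f (- y) = - f y" and y: "y \<noteq> 0"
  shows "f y = 0"
proof -
  consider "r = -2" | "r = 0" | "-2 < r" "r < 0" using r by linarith
  then show ?thesis
  proof cases
    case 1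
    then show ?thesis using homogeneous_neg2_harmonic_odd_eq_0[OF sm harm _ odd y] hom by simp
  next
    case 2
    then show ?thesis using homogeneous0_harmonic_odd_eq_0[OF sm harm _ odd y] hom by simp
  next
    case 3
    then show ?thesis using homogeneous_harmonic_eq_0[OF _ _ sm harm hom y] by simp
  qed
qed

section \<open>Coclosed anti-self-dual 1-forms\<close>

lemma anti_self_dual_coclosed_trace:
  fixes P :: "4 \<Rightarrow> 4 \<Rightarrow> 4 \<Rightarrow> real"
  assumes sym: "\<And>a b c. P a b c = P b a c"
    and div: "\<And>m. P m 1 1 + P m 2 2 + P m 3 3 + P m 4 4 = 0"
    and asd12: "\<And>m. P m 1 2 - P m 2 1 + (P m 3 4 - P m 4 3) = 0"
    and asd13: "\<And>m. P m 1 3 - P m 3 1 + (P m 4 2 - P m 2 4) = 0"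
    and asd14: "\<And>m. P m 1 4 - P m 4 1 + (P m 2 3 - P m 3 2) = 0"
  shows "P 1 1 j + P 2 2 j + P 3 3 j + P 4 4 j = 0"
proof -
  note facts = div[of 1] div[of 2] div[of 3] div[of 4]
    asd12[of 1] asd12[of 2] asd12[of 3] asd12[of 4] asd13[of 1] asd13[of 2] asd13[of 3] asd13[of 4]
    asd14[of 1] asd14[of 2] asd14[of 3] asd14[of 4]
    sym[of 1 2 1] sym[of 1 2 2] sym[of 1 2 3] sym[of 1 2 4]
    sym[of 1 3 1] sym[of 1 3 2] sym[of 1 3 3] sym[of 1 3 4]
    sym[of 1 4 1] sym[of 1 4 2] sym[of 1 4 3] sym[of 1 4 4]
    sym[of 2 3 1] sym[of 2 3 2] sym[of 2 3 3] sym[of 2 3 4]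
    sym[of 2 4 1] sym[of 2 4 2] sym[of 2 4 3] sym[of 2 4 4]
    sym[of 3 4 1] sym[of 3 4 2] sym[of 3 4 3] sym[of 3 4 4]
  consider "j = 1" | "j = 2" | "j = 3" | "j = 4" using exhaust_4 by blast
  then show ?thesis by cases (hypsubst, use facts in linarith)+
qed

lemma coclosed_anti_self_dual_component_harmonic:
  fixes \<alpha> :: "real^4 \<Rightarrow> real^4"
  assumes sm: "\<forall>i. smooth_on (UNIV - {0}) (\<lambda>y. \<alpha> y $ i)"
    and div: "\<forall>y. y \<noteq> 0 \<longrightarrow> (\<Sum>i\<in>UNIV. pd i (\<lambda>z. \<alpha> z $ i) y) = 0"
    and asd: "\<forall>y. y \<noteq> 0 \<longrightarrow>
        dcoef \<alpha> 1 2 y + dcoef \<alpha> 3 4 y = 0 \<and>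
        dcoef \<alpha> 1 3 y + dcoef \<alpha> 4 2 y = 0 \<and>
        dcoef \<alpha> 1 4 y + dcoef \<alpha> 2 3 y = 0"
    and y: "y \<noteq> 0"
  shows "laplacian (\<lambda>z. \<alpha> z $ j) y = 0"
proof -
  have S: "open (UNIV - {0::real^4})" by (simp add: open_Diff)
  define P where "P = (\<lambda>a b c. pd a (pd b (\<lambda>z. \<alpha> z $ c)) y)"
  have diff: "pd b (\<lambda>z. \<alpha> z $ c) differentiable at y" for b c
    using sm smooth_on_pd smooth_on_imp_differentiable y by blast
  have pd_sum_0: "pd m (\<lambda>z. g z + h z) y = 0" if "\<And>z. z \<noteq> 0 \<Longrightarrow> g z + h z = 0" for m g h
    by (rule pd_eq_0_if_eq_0_on_open[OF S]) (use that y in auto)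
  have P_asd: "P m a b - P m b a + (P m c d - P m d c) = 0"
    if "\<And>z. z \<noteq> 0 \<Longrightarrow> dcoef \<alpha> a b z + dcoef \<alpha> c d z = 0" for m a b c d
    using pd_sum_0[of "dcoef \<alpha> a b" "dcoef \<alpha> c d" m] that
    by (simp add: dcoef_def P_def pd_add pd_diff diff differentiable_diff)
  have "P 1 1 j + P 2 2 j + P 3 3 j + P 4 4 j = 0"
  proof (rule anti_self_dual_coclosed_trace[where P = P])
    show "P a b c = P b a c" for a b c
      unfolding P_def using smooth_on_pd_commute[OF S] sm y by blast
    show "P m 1 1 + P m 2 2 + P m 3 3 + P m 4 4 = 0" for m
    proof -
      have "pd m (\<lambda>z. \<Sum>i\<in>UNIV. pd i (\<lambda>z. \<alpha> z $ i) z) y = 0"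
        by (rule pd_eq_0_if_eq_0_on_open[OF S]) (use div y in auto)
      then show ?thesis using pd_sum[of UNIV "\<lambda>i. pd i (\<lambda>z. \<alpha> z $ i)" y m] diff
        by (simp add: P_def sum_4)
    qed
    show "P m 1 2 - P m 2 1 + (P m 3 4 - P m 4 3) = 0" for m
      by (rule P_asd) (use asd in auto)
    show "P m 1 3 - P m 3 1 + (P m 4 2 - P m 2 4) = 0" for m
      by (rule P_asd) (use asd in auto)
    show "P m 1 4 - P m 4 1 + (P m 2 3 - P m 3 2) = 0" for m
      by (rule P_asd) (use asd in auto)
  qed
  then show ?thesis by (simp add: P_def laplacian_def sum_4)
qed

theorem lemma5p8:
  fixes r :: real
  assumes "-2 \<le> r" and "r \<le> 0"
  shows "\<not> critical_rate r"
proof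
  assume "critical_rate r"
  then obtain \<alpha> :: "real^4 \<Rightarrow> real^4" where
    sm: "\<forall>i. smooth_on (UNIV - {0}) (\<lambda>y. \<alpha> y $ i)" and
    odd: "\<forall>y. y \<noteq> 0 \<longrightarrow> \<alpha> (- y) = - \<alpha> y" and
    hom: "\<forall>t y. t > 0 \<longrightarrow> y \<noteq> 0 \<longrightarrow> \<alpha> (t *\<^sub>R y) = (t powr r) *\<^sub>R \<alpha> y" and
    div: "\<forall>y. y \<noteq> 0 \<longrightarrow> (\<Sum>i\<in>UNIV. pd i (\<lambda>z. \<alpha> z $ i) y) = 0" and
    asd: "\<forall>y. y \<noteq> 0 \<longrightarrow>
        dcoef \<alpha> 1 2 y + dcoef \<alpha> 3 4 y = 0 \<and>
        dcoef \<alpha> 1 3 y + dcoef \<alpha> 4 2 y = 0 \<and>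
        dcoef \<alpha> 1 4 y + dcoef \<alpha> 2 3 y = 0" and
    nonzero: "\<exists>y. y \<noteq> 0 \<and> \<alpha> y \<noteq> 0"
    unfolding critical_rate_def by blast
  have "\<alpha> y $ j = 0" if "y \<noteq> 0" for y j
    by (rule homogeneous_harmonic_odd_eq_0[OF assms])
      (use sm odd hom that coclosed_anti_self_dual_component_harmonic[OF sm div asd]
        in \<open>auto simp: homogeneous_def\<close>)
  then show False using nonzero by (auto simp: vec_eq_iff)
qed

end
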